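(* Let $\alpha>1+d$ be an integer and $b$ an integer with $1\le b<\alpha-d$. Then there exist constants $c_1,c_2>0$ such that for every $r>0$, $$\tilde\Pi\big(F:\|F\|_{C^b(\mathbb R^d)}\ge r\big)\le c_1e^{-c_2r}.$$
   Context: $\mathcal O\subset\mathbb R^d$ nonempty bounded open with smooth boundary; $\{\psi_{kl}:k\ge1,1\le l\le L_k\}$ are the elements of an orthonormal basis of $L^2(\mathbb R^d)$ of compactly supported Daubechies wavelets (regularity $S>\alpha$) whose supports meet $\mathcal O$, $L_k\simeq2^{dk}$; $\tilde\Pi$ is the law of $\tilde F=\sum_{k,l}2^{(d/2-\alpha)k}\xi_{kl}\psi_{kl}$ with i.i.d. standard Laplace $\xi_{kl}$. $\|F\|_{C^b(\mathbb R^d)}$ is the sum of sup-norms of the derivatives of order at most $b$. *)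

theory Defs
  imports "HOL-Probability.Probability"
begin

definition pdiff :: "'n::finite \<Rightarrow> (real^'n \<Rightarrow> real) \<Rightarrow> real^'n \<Rightarrow> real" where
  "pdiff i f x = deriv (\<lambda>t. f (x + t *\<^sub>R axis i 1)) 0"

fun pdiffs :: "'n::finite list \<Rightarrow> (real^'n \<Rightarrow> real) \<Rightarrow> real^'n \<Rightarrow> real" where
  "pdiffs [] f = f"
| "pdiffs (i # is) f = pdiff i (pdiffs is f)"

definition Ck_on :: "(real^'n::finite) set \<Rightarrow> nat \<Rightarrow> (real^'n \<Rightarrow> real) \<Rightarrow> bool" where
  "Ck_on U k f \<longleftrightarrow>
     (\<forall>is. length is < k \<longrightarrow>
        (\<forall>i. \<forall>x\<in>U. (\<lambda>t. pdiffs is f (x + t *\<^sub>R axis i 1)) field_differentiable (at 0))) \<and>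
     (\<forall>is. length is \<le> k \<longrightarrow> continuous_on U (pdiffs is f))"

definition mlist :: "('n::finite \<Rightarrow> nat) \<Rightarrow> 'n list" where
  "mlist \<beta> = (SOME xs. \<forall>i. count_list xs i = \<beta> i)"

definition Dmulti :: "('n::finite \<Rightarrow> nat) \<Rightarrow> (real^'n \<Rightarrow> real) \<Rightarrow> real^'n \<Rightarrow> real" where
  "Dmulti \<beta> f = pdiffs (mlist \<beta>) f"

definition Cb_norm :: "nat \<Rightarrow> (real^'n::finite \<Rightarrow> real) \<Rightarrow> ereal" where
  "Cb_norm b f =
     (if Ck_on UNIV b f
      then (\<Sum>\<beta>\<in>{\<beta>::'n\<Rightarrow>nat. (\<Sum>i\<in>UNIV. \<beta> i) \<le> b}. (SUP x. ereal \<bar>Dmulti \<beta> f x\<bar>))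
      else \<infinity>)"

definition smooth_boundary :: "(real^'n::finite) set \<Rightarrow> bool" where
  "smooth_boundary Dom \<longleftrightarrow>
     (\<forall>p\<in>frontier Dom. \<exists>U g. open U \<and> p \<in> U \<and> (\<forall>k. Ck_on U k g) \<and>
        (\<forall>x\<in>U. \<exists>i. pdiff i g x \<noteq> 0) \<and> Dom \<inter> U = {x\<in>U. g x < 0})"

definition C1d :: "nat \<Rightarrow> (real \<Rightarrow> real) \<Rightarrow> bool" where
  "C1d S f \<longleftrightarrow> (\<forall>j<S. \<forall>t. (deriv ^^ j) f field_differentiable (at t))
                 \<and> continuous_on UNIV ((deriv ^^ S) f)"

text \<open>Tensor product generator: eps i selects the mother wavelet psi (True) or the
  father wavelet phi (False) in coordinate i.\<close>
definition tensor_gen :: "(real \<Rightarrow> real) \<Rightarrow> (real \<Rightarrow> real) \<Rightarrow> ('n::finite \<Rightarrow> bool)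
                            \<Rightarrow> real^'n \<Rightarrow> real" where
  "tensor_gen \<phi> \<psi> \<epsilon> x = (\<Prod>i\<in>UNIV. (if \<epsilon> i then \<psi> else \<phi>) (x $ i))"

definition wav :: "(real \<Rightarrow> real) \<Rightarrow> (real \<Rightarrow> real) \<Rightarrow> nat \<Rightarrow> ('n::finite \<Rightarrow> bool)
                     \<Rightarrow> ('n \<Rightarrow> int) \<Rightarrow> real^'n \<Rightarrow> real" where
  "wav \<phi> \<psi> j \<epsilon> m x =
     2 powr (real CARD('n) * real j / 2) * tensor_gen \<phi> \<psi> \<epsilon> (\<chi> i. 2 ^ j * x $ i - of_int (m i))"

text \<open>Index set of the full system: level 0 contains all types (father functions and
  level-0 wavelets), higher levels only the genuine wavelets (eps not identically False).\<close>
definition wav_system_index :: "(nat \<times> ('n::finite \<Rightarrow> bool) \<times> ('n \<Rightarrow> int)) set" where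
  "wav_system_index = {(j, \<epsilon>, m). j = 0 \<or> (\<exists>i. \<epsilon> i)}"

definition wel :: "(real \<Rightarrow> real) \<Rightarrow> (real \<Rightarrow> real) \<Rightarrow> nat \<times> ('n::finite \<Rightarrow> bool) \<times> ('n \<Rightarrow> int)
                     \<Rightarrow> real^'n \<Rightarrow> real" where
  "wel \<phi> \<psi> a = (case a of (j, \<epsilon>, m) \<Rightarrow> wav \<phi> \<psi> j \<epsilon> m)"

definition ONB_L2 :: "(real \<Rightarrow> real) \<Rightarrow> (real \<Rightarrow> real) \<Rightarrow> 'n::finite itself \<Rightarrow> bool" where
  "ONB_L2 \<phi> \<psi> _ \<longleftrightarrow>
     (\<forall>a\<in>(wav_system_index :: (nat \<times> ('n \<Rightarrow> bool) \<times> ('n \<Rightarrow> int)) set).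
      \<forall>c\<in>wav_system_index.
        integrable lborel (\<lambda>x. wel \<phi> \<psi> a x * wel \<phi> \<psi> c x) \<and>
        (LINT x|lborel. wel \<phi> \<psi> a x * wel \<phi> \<psi> c x) = (if a = c then 1 else 0)) \<and>
     (\<forall>f::real^'n \<Rightarrow> real. f \<in> borel_measurable lborel \<and> integrable lborel (\<lambda>x. (f x)\<^sup>2) \<and>
        (\<forall>a\<in>(wav_system_index :: (nat \<times> ('n \<Rightarrow> bool) \<times> ('n \<Rightarrow> int)) set).
           (LINT x|lborel. f x * wel \<phi> \<psi> a x) = 0)
        \<longrightarrow> (AE x in lborel. f x = 0))"

definition cs_wavelet_basis :: "nat \<Rightarrow> (real \<Rightarrow> real) \<Rightarrow> (real \<Rightarrow> real) \<Rightarrow> 'n::finite itself \<Rightarrow> bool" where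
  "cs_wavelet_basis S \<phi> \<psi> n \<longleftrightarrow>
     bounded {t. \<phi> t \<noteq> 0} \<and> bounded {t. \<psi> t \<noteq> 0} \<and> C1d S \<phi> \<and> C1d S \<psi> \<and> ONB_L2 \<phi> \<psi> n"

text \<open>Level k \<ge> 1 of the basis corresponds to dilation j = k - 1 (level 1 also contains
  the father functions). l = (eps, m) ranges over those elements whose support meets Dom.\<close>
definition wav_index :: "(real^'n::finite) set \<Rightarrow> (real \<Rightarrow> real) \<Rightarrow> (real \<Rightarrow> real) \<Rightarrow> nat
                          \<Rightarrow> (('n \<Rightarrow> bool) \<times> ('n \<Rightarrow> int)) set" where
  "wav_index Dom \<phi> \<psi> k = {(\<epsilon>, m). (k = 1 \<or> (\<exists>i. \<epsilon> i)) \<and>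
                              closure {x. wav \<phi> \<psi> (k - 1) \<epsilon> m x \<noteq> 0} \<inter> Dom \<noteq> {}}"

definition coef_index :: "(real^'n::finite) set \<Rightarrow> (real \<Rightarrow> real) \<Rightarrow> (real \<Rightarrow> real)
                           \<Rightarrow> (nat \<times> ('n \<Rightarrow> bool) \<times> ('n \<Rightarrow> int)) set" where
  "coef_index Dom \<phi> \<psi> = Sigma {1..} (wav_index Dom \<phi> \<psi>)"

definition laplace :: "real measure" where
  "laplace = density lborel (\<lambda>x. ennreal (exp (- \<bar>x\<bar>) / 2))"

definition coef_law :: "(real^'n::finite) set \<Rightarrow> (real \<Rightarrow> real) \<Rightarrow> (real \<Rightarrow> real)
                        \<Rightarrow> (nat \<times> ('n \<Rightarrow> bool) \<times> ('n \<Rightarrow> int) \<Rightarrow> real) measure" where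
  "coef_law Dom \<phi> \<psi> = PiM (coef_index Dom \<phi> \<psi>) (\<lambda>_. laplace)"

definition Ftilde :: "real \<Rightarrow> (real^'n::finite) set \<Rightarrow> (real \<Rightarrow> real) \<Rightarrow> (real \<Rightarrow> real)
                      \<Rightarrow> (nat \<times> ('n \<Rightarrow> bool) \<times> ('n \<Rightarrow> int) \<Rightarrow> real) \<Rightarrow> real^'n \<Rightarrow> real" where
  "Ftilde \<alpha> Dom \<phi> \<psi> \<xi> x =
     (\<Sum>k. \<Sum>(\<epsilon>, m)\<in>wav_index Dom \<phi> \<psi> (Suc k).
        2 powr ((real CARD('n) / 2 - \<alpha>) * real (Suc k)) * \<xi> (Suc k, \<epsilon>, m) * wav \<phi> \<psi> k \<epsilon> m x)"

end

theory Submission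
  imports Defs
begin

text \<open>If every coefficient of level \<open>k\<close> is at most \<open>T (3/2)^k\<close> in absolute value, then at each
  point only boundedly many level-\<open>k\<close> wavelets are nonzero, and each derivative of order at most
  \<open>b\<close> of the level-\<open>k\<close> part of \<open>F\<close> is bounded by a constant times
  \<open>2^((d/2 - \<alpha>)(k+1)) 2^(dk/2) 2^(bk) T (3/2)^k \<le> T (3/4)^k\<close>, because \<open>b + d + 1 \<le> \<alpha>\<close>.
  Summing over \<open>k\<close> gives \<open>\<parallel>F\<parallel>_{C^b} \<le> C T\<close>. The complementary event has probability at most
  \<open>\<Sum>_k #(level k) exp (- T (3/2)^k) \<le> \<Sum>_k c 2^(dk) exp (- T (1 + k/2)) \<le> 2c exp (- T)\<close> once
  \<open>T \<ge> 2 (d + 1)\<close>. Taking \<open>T\<close> proportional to \<open>r\<close> gives the exponential tail.\<close>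

lemma DERIV_shift_at_0:
  "((\<lambda>s. h (t + s)) has_field_derivative y) (at 0) \<longleftrightarrow> (h has_field_derivative y) (at (t::real))"
  using DERIV_shift[of h y 0 t] by (simp add: add.commute)

lemma line_shift: "x + (t + s) *\<^sub>R axis i (1::real) = (x + t *\<^sub>R axis i 1) + s *\<^sub>R axis i 1"
  by (simp add: algebra_simps)

lemma pdiff_along_line: "pdiff i f (x + t *\<^sub>R axis i 1) = deriv (\<lambda>s. f (x + s *\<^sub>R axis i 1)) t"
  using DERIV_shift_at_0[of "\<lambda>u. f (x + u *\<^sub>R axis i 1)" t]
  by (simp add: pdiff_def deriv_def line_shift)

lemma field_differentiable_along_line:
  assumes "\<forall>i x. (\<lambda>t. g (x + t *\<^sub>R axis i 1)) field_differentiable (at 0)"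
  shows "(\<lambda>s. g (x + s *\<^sub>R axis i (1::real))) field_differentiable (at t)"
proof -
  have "(\<lambda>s. g ((x + t *\<^sub>R axis i 1) + s *\<^sub>R axis i 1)) field_differentiable (at 0)"
    using assms by blast
  then show ?thesis
    using DERIV_shift_at_0[of "\<lambda>u. g (x + u *\<^sub>R axis i 1)" t]
    by (simp add: field_differentiable_def line_shift)
qed

lemma has_field_derivative_along_line:
  assumes "\<forall>i x. (\<lambda>t. g (x + t *\<^sub>R axis i 1)) field_differentiable (at 0)"
  shows "((\<lambda>s. g (x + s *\<^sub>R axis i (1::real))) has_field_derivative pdiff i g (x + t *\<^sub>R axis i 1)) (at t)"
  using field_differentiable_along_line[OF assms, of x i t]
  by (simp add: pdiff_along_line DERIV_deriv_iff_field_differentiable)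

lemma has_field_derivative_pdiff:
  "(\<lambda>t. g (x + t *\<^sub>R axis i 1)) field_differentiable (at 0) \<Longrightarrow>
   ((\<lambda>t. g (x + t *\<^sub>R axis i 1)) has_field_derivative pdiff i g x) (at 0)"
  by (simp add: pdiff_def DERIV_deriv_iff_field_differentiable)

lemma Ck_on_differentiable:
  "Ck_on UNIV b f \<Longrightarrow> length js < b \<Longrightarrow>
    \<forall>i x. (\<lambda>t. pdiffs js f (x + t *\<^sub>R axis i 1)) field_differentiable (at 0)"
  unfolding Ck_on_def by blast

lemma Ck_on_continuous: "Ck_on UNIV b f \<Longrightarrow> length js \<le> b \<Longrightarrow> continuous_on UNIV (pdiffs js f)"
  unfolding Ck_on_def by blast

lemma Ck_on_mono: "Ck_on U S f \<Longrightarrow> b \<le> S \<Longrightarrow> Ck_on U b f"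
  unfolding Ck_on_def by auto

section \<open>Termwise differentiation of sums and series\<close>

lemma has_field_derivative_sum_along_line:
  fixes f :: "'a \<Rightarrow> (real^'n::finite) \<Rightarrow> real"
  assumes "\<And>a. a \<in> A \<Longrightarrow> Ck_on UNIV b (f a)" and "length js < b"
  shows "((\<lambda>t. \<Sum>a\<in>A. pdiffs js (f a) (x + t *\<^sub>R axis i 1)) has_field_derivative
            (\<Sum>a\<in>A. pdiffs (i # js) (f a) x)) (at 0)"
  using assms by (auto intro!: DERIV_sum has_field_derivative_pdiff dest: Ck_on_differentiable)

lemma pdiffs_sum:
  fixes f :: "'a \<Rightarrow> (real^'n::finite) \<Rightarrow> real"
  assumes "\<And>a. a \<in> A \<Longrightarrow> Ck_on UNIV b (f a)" and "length js \<le> b"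
  shows "pdiffs js (\<lambda>x. \<Sum>a\<in>A. f a x) = (\<lambda>x. \<Sum>a\<in>A. pdiffs js (f a) x)"
  using assms(2)
proof (induction js)
  case (Cons i js)
  then have len: "length js < b" by simp
  have "pdiff i (\<lambda>x. \<Sum>a\<in>A. pdiffs js (f a) x) x = (\<Sum>a\<in>A. pdiffs (i # js) (f a) x)" for x
    unfolding pdiff_def
    by (rule DERIV_imp_deriv[OF has_field_derivative_sum_along_line[where A = A and f = f, OF assms(1) len]])
  then show ?case using Cons len by auto
qed simp

lemma Ck_on_sum:
  fixes f :: "'a \<Rightarrow> (real^'n::finite) \<Rightarrow> real"
  assumes "\<And>a. a \<in> A \<Longrightarrow> Ck_on UNIV b (f a)"
  shows "Ck_on UNIV b (\<lambda>x. \<Sum>a\<in>A. f a x)"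
  unfolding Ck_on_def
proof (intro conjI allI impI ballI)
  fix js :: "'n list" and i x assume "length js < b"
  then show "(\<lambda>t. pdiffs js (\<lambda>x. \<Sum>a\<in>A. f a x) (x + t *\<^sub>R axis i 1)) field_differentiable (at 0)"
    using has_field_derivative_sum_along_line[where A = A and f = f, OF assms] pdiffs_sum[where A = A and f = f, OF assms, of js]
    unfolding field_differentiable_def by auto
next
  fix js :: "'n list" assume "length js \<le> b"
  then show "continuous_on UNIV (pdiffs js (\<lambda>x. \<Sum>a\<in>A. f a x))"
    using pdiffs_sum[where A = A and f = f, OF assms] by (auto intro!: continuous_on_sum Ck_on_continuous[OF assms])
qed

context
  fixes u :: "nat \<Rightarrow> (real^'n::finite) \<Rightarrow> real" and M :: "nat \<Rightarrow> real" and b :: nat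
  assumes Ck_on_u: "\<And>k. Ck_on UNIV b (u k)"
    and pdiffs_u_bound: "\<And>k (js::'n list) x. length js \<le> b \<Longrightarrow> \<bar>pdiffs js (u k) x\<bar> \<le> M k"
    and summable_M: "summable M"
begin

lemma has_field_derivative_suminf_along_line:
  assumes "length js < b"
  shows "((\<lambda>t. \<Sum>k. pdiffs js (u k) (x + t *\<^sub>R axis i 1)) has_field_derivative
            (\<Sum>k. pdiffs (i # js) (u k) x)) (at 0)"
proof -
  define g where "g k t = pdiffs js (u k) (x + t *\<^sub>R axis i 1)" for k t
  define g' where "g' k t = pdiffs (i # js) (u k) (x + t *\<^sub>R axis i 1)" for k t
  have "(g k has_field_derivative g' k t) (at t within UNIV)" for k t
    unfolding g_def g'_def
    using has_field_derivative_along_line[OF Ck_on_differentiable[OF Ck_on_u assms]] by simp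
  moreover have "uniformly_convergent_on UNIV (\<lambda>n t. \<Sum>k<n. g' k t)"
    by (rule Weierstrass_m_test'[where M = M])
       (use pdiffs_u_bound[of "i # js"] assms summable_M in \<open>auto simp: g'_def\<close>)
  moreover have "summable (\<lambda>n. g n 0)"
    by (rule summable_comparison_test[OF _ summable_M])
       (use pdiffs_u_bound assms in \<open>auto intro!: exI[of _ 0] simp: g_def\<close>)
  ultimately have "((\<lambda>t. \<Sum>n. g n t) has_field_derivative (\<Sum>n. g' n 0)) (at 0)"
    by (intro has_field_derivative_series'(2)[OF convex_UNIV]) auto
  then show ?thesis by (simp add: g_def g'_def)
qed

lemma pdiffs_suminf:
  "length js \<le> b \<Longrightarrow> pdiffs js (\<lambda>x. \<Sum>k. u k x) = (\<lambda>x. \<Sum>k. pdiffs js (u k) x)"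
proof (induction js)
  case (Cons i js)
  then have len: "length js < b" by simp
  have "pdiff i (\<lambda>x. \<Sum>k. pdiffs js (u k) x) x = (\<Sum>k. pdiffs (i # js) (u k) x)" for x
    unfolding pdiff_def by (rule DERIV_imp_deriv[OF has_field_derivative_suminf_along_line[OF len]])
  then show ?case using Cons len by auto
qed simp

lemma pdiffs_suminf_bound:
  assumes "length js \<le> b"
  shows "\<bar>pdiffs js (\<lambda>x. \<Sum>k. u k x) x\<bar> \<le> (\<Sum>k. M k)"
proof -
  have summable_abs: "summable (\<lambda>k. \<bar>pdiffs js (u k) x\<bar>)"
    by (rule summable_comparison_test[OF _ summable_M]) (use pdiffs_u_bound assms in auto)
  have "\<bar>\<Sum>k. pdiffs js (u k) x\<bar> \<le> (\<Sum>k. \<bar>pdiffs js (u k) x\<bar>)"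
    using summable_rabs[OF summable_abs] by blast
  also have "\<dots> \<le> (\<Sum>k. M k)"
    by (rule suminf_le) (use pdiffs_u_bound assms summable_abs summable_M in auto)
  finally show ?thesis using pdiffs_suminf[OF assms] by simp
qed

lemma Ck_on_suminf: "Ck_on UNIV b (\<lambda>x. \<Sum>k. u k x)"
  unfolding Ck_on_def
proof (intro conjI allI impI ballI)
  fix js :: "'n list" and i x assume "length js < b"
  then show "(\<lambda>t. pdiffs js (\<lambda>x. \<Sum>k. u k x) (x + t *\<^sub>R axis i 1)) field_differentiable (at 0)"
    using has_field_derivative_suminf_along_line pdiffs_suminf[of js]
    unfolding field_differentiable_def by auto
next
  fix js :: "'n list" assume len: "length js \<le> b"
  have "uniform_limit UNIV (\<lambda>n x. \<Sum>k<n. pdiffs js (u k) x) (\<lambda>x. \<Sum>k. pdiffs js (u k) x) sequentially"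
    by (rule Weierstrass_m_test[where M = M]) (use pdiffs_u_bound len summable_M in auto)
  then have "continuous_on UNIV (\<lambda>x. \<Sum>k. pdiffs js (u k) x)"
    by (rule uniform_limit_theorem[rotated])
       (auto intro!: always_eventually continuous_on_sum Ck_on_continuous[OF Ck_on_u len])
  then show "continuous_on UNIV (pdiffs js (\<lambda>x. \<Sum>k. u k x))"
    using pdiffs_suminf[OF len] by simp
qed

end

lemma has_field_derivative_tensor_along_line:
  fixes G :: "'n::finite \<Rightarrow> real \<Rightarrow> real"
  assumes "G i field_differentiable (at (x $ i))"
  shows "((\<lambda>t. c * (\<Prod>j\<in>UNIV. G j ((x + t *\<^sub>R axis i 1) $ j))) has_field_derivative
          c * (\<Prod>j\<in>UNIV. (if j = i then deriv (G j) else G j) (x $ j))) (at 0)"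
proof -
  have line: "(\<Prod>j\<in>UNIV. G j ((x + t *\<^sub>R axis i 1) $ j)) = G i (x$i + t) * (\<Prod>j\<in>UNIV-{i}. G j (x $ j))" for t
    by (subst prod.remove[of UNIV i]) (auto simp: axis_def intro!: prod.cong)
  have derivative: "(\<Prod>j\<in>UNIV. (if j = i then deriv (G j) else G j) (x $ j))
      = deriv (G i) (x$i) * (\<Prod>j\<in>UNIV-{i}. G j (x $ j))"
    by (subst prod.remove[of UNIV i]) (auto intro!: prod.cong)
  have "((\<lambda>s. G i (x$i + s)) has_field_derivative deriv (G i) (x$i)) (at 0)"
    using assms by (simp add: DERIV_shift_at_0 DERIV_deriv_iff_field_differentiable)
  then show ?thesis
    unfolding line derivative by (intro DERIV_cmult DERIV_cmult_right)
qed

lemma has_field_derivative_tensor_pdiffs: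
  fixes f :: "'n::finite \<Rightarrow> real \<Rightarrow> real"
  assumes "\<And>j n t. n < S \<Longrightarrow> (deriv ^^ n) (f j) field_differentiable (at t)"
    and "length js < S"
  shows "((\<lambda>t. c * (\<Prod>j\<in>UNIV. (deriv ^^ count_list js j) (f j) ((x + t *\<^sub>R axis i 1) $ j)))
      has_field_derivative c * (\<Prod>j\<in>UNIV. (deriv ^^ count_list (i # js) j) (f j) (x$j))) (at 0)"
proof -
  have "(deriv ^^ count_list js i) (f i) field_differentiable (at (x $ i))"
    using assms count_le_length[of js i] by simp
  then have "((\<lambda>t. c * (\<Prod>j\<in>UNIV. (deriv ^^ count_list js j) (f j) ((x + t *\<^sub>R axis i 1) $ j)))
      has_field_derivative c * (\<Prod>j\<in>UNIV. (if j = i then deriv ((deriv ^^ count_list js j) (f j))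
        else (deriv ^^ count_list js j) (f j)) (x $ j))) (at 0)"
    by (rule has_field_derivative_tensor_along_line[where G = "\<lambda>j. (deriv ^^ count_list js j) (f j)"])
  moreover have "(\<Prod>j\<in>UNIV. (if j = i then deriv ((deriv ^^ count_list js j) (f j))
      else (deriv ^^ count_list js j) (f j)) (x $ j)) = (\<Prod>j\<in>UNIV. (deriv ^^ count_list (i # js) j) (f j) (x$j))"
    by (intro prod.cong) auto
  ultimately show ?thesis by simp
qed

lemma pdiffs_tensor:
  fixes f :: "'n::finite \<Rightarrow> real \<Rightarrow> real"
  assumes "\<And>j n t. n < S \<Longrightarrow> (deriv ^^ n) (f j) field_differentiable (at t)"
  shows "length js \<le> S \<Longrightarrow> pdiffs js (\<lambda>x. c * (\<Prod>j\<in>UNIV. f j (x$j)))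
           = (\<lambda>x. c * (\<Prod>j\<in>UNIV. (deriv ^^ count_list js j) (f j) (x$j)))"
proof (induction js)
  case (Cons i js)
  then have len: "length js < S" by simp
  have "pdiff i (\<lambda>x. c * (\<Prod>j\<in>UNIV. (deriv ^^ count_list js j) (f j) (x$j))) x
      = c * (\<Prod>j\<in>UNIV. (deriv ^^ count_list (i # js) j) (f j) (x$j))" for x
    unfolding pdiff_def by (rule DERIV_imp_deriv[OF has_field_derivative_tensor_pdiffs[OF assms len]])
  then show ?case using Cons len by auto
qed simp

lemma Ck_on_tensor:
  fixes f :: "'n::finite \<Rightarrow> real \<Rightarrow> real"
  assumes differentiable: "\<And>j n t. n < S \<Longrightarrow> (deriv ^^ n) (f j) field_differentiable (at t)"
    and continuous: "\<And>j n. n \<le> S \<Longrightarrow> continuous_on UNIV ((deriv ^^ n) (f j))"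
  shows "Ck_on UNIV S (\<lambda>x. c * (\<Prod>j\<in>UNIV. f j (x$j)))"
  unfolding Ck_on_def
proof (intro conjI allI impI ballI)
  fix js :: "'n list" and i x assume len: "length js < S"
  then show "(\<lambda>t. pdiffs js (\<lambda>x. c * (\<Prod>j\<in>UNIV. f j (x $ j))) (x + t *\<^sub>R axis i 1)) field_differentiable (at 0)"
    using has_field_derivative_tensor_pdiffs[where f = f, OF differentiable len]
      pdiffs_tensor[where f = f and js = js and c = c, OF differentiable]
    unfolding field_differentiable_def by auto
next
  fix js :: "'n list" assume len: "length js \<le> S"
  have "continuous_on UNIV (\<lambda>x::real^'n. (deriv ^^ count_list js j) (f j) (x $ j))" for j
  proof (rule continuous_on_compose2[OF continuous])
    show "count_list js j \<le> S" using count_le_length[of js j] len by linarith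
  qed (auto intro: continuous_intros)
  then have "continuous_on UNIV (\<lambda>x::real^'n. c * (\<Prod>j\<in>UNIV. (deriv ^^ count_list js j) (f j) (x $ j)))"
    by (intro continuous_on_mult continuous_on_const continuous_on_prod) auto
  then show "continuous_on UNIV (pdiffs js (\<lambda>x. c * (\<Prod>j\<in>UNIV. f j (x $ j))))"
    using pdiffs_tensor[where f = f, OF differentiable len] by simp
qed

lemma has_field_derivative_scaled_affine_comp:
  fixes h :: "real \<Rightarrow> real"
  assumes "h field_differentiable (at (a * t - c))"
  shows "((\<lambda>s. e * h (a * s - c)) has_field_derivative e * a * deriv h (a * t - c)) (at t)"
proof -
  have "((\<lambda>s. h (a * s - c)) has_field_derivative deriv h (a * t - c) * a) (at t)"
    using assms
    by (intro DERIV_chain2[where g = "\<lambda>s. a * s - c"])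
       (auto intro!: derivative_eq_intros simp: DERIV_deriv_iff_field_differentiable)
  then show ?thesis using DERIV_cmult by (fastforce simp: ac_simps)
qed

lemma deriv_funpow_affine:
  fixes g :: "real \<Rightarrow> real"
  assumes "\<And>n t. n < S \<Longrightarrow> (deriv ^^ n) g field_differentiable (at t)"
  shows "n \<le> S \<Longrightarrow> (deriv ^^ n) (\<lambda>s. g (a * s - c)) = (\<lambda>s. a ^ n * (deriv ^^ n) g (a * s - c))"
proof (induction n)
  case (Suc n)
  then have IH: "(deriv ^^ n) (\<lambda>s. g (a * s - c)) = (\<lambda>s. a ^ n * (deriv ^^ n) g (a * s - c))"
    by simp
  have "((\<lambda>s. a ^ n * (deriv ^^ n) g (a * s - c)) has_field_derivative
      a ^ n * a * deriv ((deriv ^^ n) g) (a * s - c)) (at s)" for s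
    using Suc.prems by (intro has_field_derivative_scaled_affine_comp assms) simp
  then have "deriv (\<lambda>s. a ^ n * (deriv ^^ n) g (a * s - c)) s = a ^ Suc n * (deriv ^^ Suc n) g (a * s - c)" for s
    by (simp add: mult.commute[of "a ^ n" a] DERIV_imp_deriv)
  then show ?case by (simp add: IH fun_eq_iff)
qed simp

lemma deriv_funpow_affine_differentiable:
  fixes g :: "real \<Rightarrow> real"
  assumes "\<And>n t. n < S \<Longrightarrow> (deriv ^^ n) g field_differentiable (at t)" and "n < S"
  shows "(deriv ^^ n) (\<lambda>s. g (a * s - c)) field_differentiable (at t)"
proof -
  have "(deriv ^^ n) (\<lambda>s. g (a * s - c)) = (\<lambda>s. a ^ n * (deriv ^^ n) g (a * s - c))"
    using deriv_funpow_affine[OF assms(1)] assms(2) by simp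
  then show ?thesis
    using has_field_derivative_scaled_affine_comp[where a = a and t = t and c = c and e = "a ^ n",
        OF assms(1)[OF assms(2)]]
    unfolding field_differentiable_def by auto
qed

lemma continuous_on_deriv_funpow_affine:
  fixes g :: "real \<Rightarrow> real"
  assumes "\<And>n t. n < S \<Longrightarrow> (deriv ^^ n) g field_differentiable (at t)"
    and "continuous_on UNIV ((deriv ^^ n) g)" and "n \<le> S"
  shows "continuous_on UNIV ((deriv ^^ n) (\<lambda>s. g (a * s - c)))"
proof -
  have "continuous_on UNIV (\<lambda>s. a ^ n * (deriv ^^ n) g (a * s - c))"
    by (intro continuous_intros continuous_on_compose2[OF assms(2)]) auto
  then show ?thesis using deriv_funpow_affine[OF assms(1,3)] by simp
qed

lemma C1d_differentiable: "C1d S g \<Longrightarrow> n < S \<Longrightarrow> (deriv ^^ n) g field_differentiable (at t)"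
  unfolding C1d_def by blast

lemma C1d_continuous: "C1d S g \<Longrightarrow> n \<le> S \<Longrightarrow> continuous_on UNIV ((deriv ^^ n) g)"
  unfolding C1d_def
  by (cases "n = S") (auto intro!: continuous_at_imp_continuous_on field_differentiable_imp_continuous_at)

lemma deriv_funpow_vanishes_outside:
  fixes g :: "real \<Rightarrow> real"
  assumes "\<And>t. N < \<bar>t\<bar> \<Longrightarrow> g t = 0"
  shows "N < \<bar>t\<bar> \<Longrightarrow> (deriv ^^ n) g t = 0"
proof (induction n arbitrary: t)
  case 0
  then show ?case using assms by simp
next
  case (Suc n)
  have "((\<lambda>_. 0) has_field_derivative 0) (at t)" by simp
  then have "((deriv ^^ n) g has_field_derivative 0) (at t)"
    by (rule has_field_derivative_transform_within_open[where S = "{t. N < \<bar>t\<bar>}"])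
       (use Suc in \<open>auto intro!: open_Collect_less continuous_intros\<close>)
  then show ?case by (simp add: DERIV_imp_deriv)
qed

lemma deriv_funpow_bounded:
  fixes g :: "real \<Rightarrow> real"
  assumes "\<And>t. N < \<bar>t\<bar> \<Longrightarrow> g t = 0" and "continuous_on UNIV ((deriv ^^ n) g)"
  shows "\<exists>B. \<forall>t. \<bar>(deriv ^^ n) g t\<bar> \<le> B"
proof -
  have "compact ((deriv ^^ n) g ` {-N..N})"
    by (rule compact_continuous_image[OF continuous_on_subset[OF assms(2)] compact_Icc]) auto
  then obtain B where B: "\<And>y. y \<in> (deriv ^^ n) g ` {-N..N} \<Longrightarrow> norm y \<le> B"
    using compact_imp_bounded bounded_iff by metis
  have "\<bar>(deriv ^^ n) g t\<bar> \<le> max B 0" for t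
  proof (cases "N < \<bar>t\<bar>")
    case True
    then show ?thesis using deriv_funpow_vanishes_outside[OF assms(1) True] by simp
  next
    case False
    then have "t \<in> {-N..N}" by auto
    then show ?thesis using B[of "(deriv ^^ n) g t"] by fastforce
  qed
  then show ?thesis by blast
qed

lemma uniform_bound_upto:
  assumes "\<And>n. n \<le> (K::nat) \<Longrightarrow> \<exists>B. \<forall>t. \<bar>h n t\<bar> \<le> (B::real)"
  shows "\<exists>B\<ge>1. \<forall>n\<le>K. \<forall>t. \<bar>h n t\<bar> \<le> B"
  using assms
proof (induction K)
  case 0
  then obtain B where "\<forall>t. \<bar>h 0 t\<bar> \<le> B" by blast
  then show ?case by (intro exI[of _ "max B 1"]) (simp add: le_max_iff_disj)
next
  case (Suc K)
  then obtain B where "B \<ge> 1" "\<forall>n\<le>K. \<forall>t. \<bar>h n t\<bar> \<le> B" by force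
  moreover obtain B' where "\<forall>t. \<bar>h (Suc K) t\<bar> \<le> B'" using Suc.prems by blast
  ultimately show ?case
    by (intro exI[of _ "max B B'"]) (auto simp: le_Suc_eq le_max_iff_disj)
qed

section \<open>Compactly supported wavelets\<close>

lemma finite_lattice_box:
  "finite {(\<epsilon>::'n::finite\<Rightarrow>bool, m::'n\<Rightarrow>int). \<forall>j. lo j \<le> m j \<and> m j \<le> lo j + int L}"
  and card_lattice_box_le:
  "card {(\<epsilon>::'n::finite\<Rightarrow>bool, m::'n\<Rightarrow>int). \<forall>j. lo j \<le> m j \<and> m j \<le> lo j + int L}
     \<le> 2 ^ CARD('n) * (L + 1) ^ CARD('n)"
proof -
  let ?E = "PiE (UNIV::'n set) (\<lambda>_. UNIV::bool set)" and ?P = "PiE UNIV (\<lambda>j. {lo j .. lo j + int L})"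
  have box: "{(\<epsilon>::'n\<Rightarrow>bool, m::'n\<Rightarrow>int). \<forall>j. lo j \<le> m j \<and> m j \<le> lo j + int L} \<subseteq> ?E \<times> ?P"
    by (auto simp: PiE_UNIV_domain)
  have finite: "finite (?E \<times> ?P)"
    by (intro finite_cartesian_product finite_PiE) auto
  have "card ?E = 2 ^ CARD('n)"
    by (subst card_PiE) (simp_all add: prod_constant)
  moreover have "card ?P = (L + 1) ^ CARD('n)"
    by (subst card_PiE) (simp_all add: prod_constant nat_add_distrib)
  ultimately have "card (?E \<times> ?P) = 2 ^ CARD('n) * (L + 1) ^ CARD('n)"
    by (simp only: card_cartesian_product)
  then show "finite {(\<epsilon>::'n\<Rightarrow>bool, m::'n\<Rightarrow>int). \<forall>j. lo j \<le> m j \<and> m j \<le> lo j + int L}"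
    and "card {(\<epsilon>::'n\<Rightarrow>bool, m::'n\<Rightarrow>int). \<forall>j. lo j \<le> m j \<and> m j \<le> lo j + int L}
      \<le> 2 ^ CARD('n) * (L + 1) ^ CARD('n)"
    using card_mono[OF finite box] finite_subset[OF box finite] by simp_all
qed

definition tensor_factor :: "(real \<Rightarrow> real) \<Rightarrow> (real \<Rightarrow> real) \<Rightarrow> ('n \<Rightarrow> bool) \<Rightarrow> 'n \<Rightarrow> real \<Rightarrow> real" where
  "tensor_factor \<phi> \<psi> \<epsilon> j = (if \<epsilon> j then \<psi> else \<phi>)"

definition wav_factor :: "(real \<Rightarrow> real) \<Rightarrow> (real \<Rightarrow> real) \<Rightarrow> nat \<Rightarrow> ('n \<Rightarrow> bool) \<Rightarrow> ('n \<Rightarrow> int)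
    \<Rightarrow> 'n \<Rightarrow> real \<Rightarrow> real" where
  "wav_factor \<phi> \<psi> k \<epsilon> m j s = tensor_factor \<phi> \<psi> \<epsilon> j (2 ^ k * s - of_int (m j))"

lemma scaled_wav_eq_tensor:
  "(\<lambda>x. c * wav \<phi> \<psi> k \<epsilon> m x)
    = (\<lambda>x::real^'n::finite. (c * 2 powr (real CARD('n) * real k / 2)) * (\<Prod>j\<in>UNIV. wav_factor \<phi> \<psi> k \<epsilon> m j (x$j)))"
  by (simp add: wav_def tensor_gen_def wav_factor_def tensor_factor_def mult.assoc)

locale compact_wavelet_pair =
  fixes \<phi> \<psi> :: "real \<Rightarrow> real" and S N :: nat
  assumes C1d_\<phi>: "C1d S \<phi>" and C1d_\<psi>: "C1d S \<psi>"
    and \<phi>_vanishes: "\<And>t. real N < \<bar>t\<bar> \<Longrightarrow> \<phi> t = 0"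
    and \<psi>_vanishes: "\<And>t. real N < \<bar>t\<bar> \<Longrightarrow> \<psi> t = 0"
begin

lemma tensor_factor_differentiable:
  "n < S \<Longrightarrow> (deriv ^^ n) (tensor_factor \<phi> \<psi> \<epsilon> j) field_differentiable (at t)"
  using C1d_differentiable[OF C1d_\<phi>] C1d_differentiable[OF C1d_\<psi>] by (simp add: tensor_factor_def)

lemma tensor_factor_continuous:
  "n \<le> S \<Longrightarrow> continuous_on UNIV ((deriv ^^ n) (tensor_factor \<phi> \<psi> \<epsilon> j))"
  using C1d_continuous[OF C1d_\<phi>] C1d_continuous[OF C1d_\<psi>] by (simp add: tensor_factor_def)

lemma tensor_factor_vanishes: "real N < \<bar>t\<bar> \<Longrightarrow> (deriv ^^ n) (tensor_factor \<phi> \<psi> \<epsilon> j) t = 0"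
  using deriv_funpow_vanishes_outside[OF \<phi>_vanishes] deriv_funpow_vanishes_outside[OF \<psi>_vanishes]
  by (simp add: tensor_factor_def)

lemma wav_factor_differentiable:
  "n < S \<Longrightarrow> (deriv ^^ n) (wav_factor \<phi> \<psi> k \<epsilon> m j) field_differentiable (at t)"
  unfolding wav_factor_def[abs_def]
  by (rule deriv_funpow_affine_differentiable[OF tensor_factor_differentiable])

lemma wav_factor_continuous: "n \<le> S \<Longrightarrow> continuous_on UNIV ((deriv ^^ n) (wav_factor \<phi> \<psi> k \<epsilon> m j))"
  unfolding wav_factor_def[abs_def]
  by (rule continuous_on_deriv_funpow_affine[OF tensor_factor_differentiable tensor_factor_continuous])

lemma deriv_funpow_wav_factor:
  "n \<le> S \<Longrightarrow> (deriv ^^ n) (wav_factor \<phi> \<psi> k \<epsilon> m j)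
    = (\<lambda>s. (2 ^ k) ^ n * (deriv ^^ n) (tensor_factor \<phi> \<psi> \<epsilon> j) (2 ^ k * s - of_int (m j)))"
  unfolding wav_factor_def[abs_def]
  by (rule deriv_funpow_affine[where S = S, OF tensor_factor_differentiable])

lemma derivatives_bounded:
  obtains B where "B \<ge> 1" and "\<And>n t. n \<le> S \<Longrightarrow> \<bar>(deriv ^^ n) \<phi> t\<bar> \<le> B \<and> \<bar>(deriv ^^ n) \<psi> t\<bar> \<le> B"
proof -
  have "\<exists>B\<ge>1. \<forall>n\<le>S. \<forall>t. \<bar>\<bar>(deriv ^^ n) \<phi> t\<bar> + \<bar>(deriv ^^ n) \<psi> t\<bar>\<bar> \<le> B"
  proof (rule uniform_bound_upto)
    fix n assume n: "n \<le> S"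
    obtain B1 where "\<forall>t. \<bar>(deriv ^^ n) \<phi> t\<bar> \<le> B1"
      using deriv_funpow_bounded[OF \<phi>_vanishes C1d_continuous[OF C1d_\<phi> n]] by blast
    moreover obtain B2 where "\<forall>t. \<bar>(deriv ^^ n) \<psi> t\<bar> \<le> B2"
      using deriv_funpow_bounded[OF \<psi>_vanishes C1d_continuous[OF C1d_\<psi> n]] by blast
    ultimately show "\<exists>B. \<forall>t. \<bar>\<bar>(deriv ^^ n) \<phi> t\<bar> + \<bar>(deriv ^^ n) \<psi> t\<bar>\<bar> \<le> B"
      by (intro exI[of _ "B1 + B2"]) (auto intro: add_mono)
  qed
  then obtain B where "B \<ge> 1" and B: "\<forall>n\<le>S. \<forall>t. \<bar>\<bar>(deriv ^^ n) \<phi> t\<bar> + \<bar>(deriv ^^ n) \<psi> t\<bar>\<bar> \<le> B"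
    by blast
  moreover have "\<bar>(deriv ^^ n) \<phi> t\<bar> \<le> B \<and> \<bar>(deriv ^^ n) \<psi> t\<bar> \<le> B" if "n \<le> S" for n t
  proof -
    have "\<bar>\<bar>(deriv ^^ n) \<phi> t\<bar> + \<bar>(deriv ^^ n) \<psi> t\<bar>\<bar> \<le> B" using B that by blast
    then show ?thesis by linarith
  qed
  ultimately show thesis using that by blast
qed

lemma Ck_on_scaled_wav: "b \<le> S \<Longrightarrow> Ck_on UNIV b (\<lambda>x::real^'n::finite. c * wav \<phi> \<psi> k \<epsilon> m x)"
  unfolding scaled_wav_eq_tensor
  by (rule Ck_on_mono[OF Ck_on_tensor[where f = "wav_factor \<phi> \<psi> k \<epsilon> m",
        OF wav_factor_differentiable wav_factor_continuous]])

lemma pdiffs_scaled_wav: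
  fixes x :: "real^'n::finite"
  assumes "length js \<le> S"
  shows "pdiffs js (\<lambda>x. c * wav \<phi> \<psi> k \<epsilon> m x) x = (c * 2 powr (real CARD('n) * real k / 2)) *
      (\<Prod>j\<in>UNIV. (2 ^ k) ^ count_list js j *
        (deriv ^^ count_list js j) (tensor_factor \<phi> \<psi> \<epsilon> j) (2 ^ k * x$j - of_int (m j)))"
proof -
  let ?C = "c * 2 powr (real CARD('n) * real k / 2)"
  have "pdiffs js (\<lambda>x. ?C * (\<Prod>j\<in>UNIV. wav_factor \<phi> \<psi> k \<epsilon> m j (x$j)))
      = (\<lambda>x. ?C * (\<Prod>j\<in>UNIV. (deriv ^^ count_list js j) (wav_factor \<phi> \<psi> k \<epsilon> m j) (x$j)))"
    by (rule pdiffs_tensor[OF wav_factor_differentiable assms])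
  then have "pdiffs js (\<lambda>x. c * wav \<phi> \<psi> k \<epsilon> m x) x
      = ?C * (\<Prod>j\<in>UNIV. (deriv ^^ count_list js j) (wav_factor \<phi> \<psi> k \<epsilon> m j) (x$j))"
    unfolding scaled_wav_eq_tensor by simp
  also have "\<dots> = (c * 2 powr (real CARD('n) * real k / 2)) *
      (\<Prod>j\<in>UNIV. (2 ^ k) ^ count_list js j *
        (deriv ^^ count_list js j) (tensor_factor \<phi> \<psi> \<epsilon> j) (2 ^ k * x$j - of_int (m j)))"
    by (intro arg_cong[where f = "\<lambda>y. ?C * y"] prod.cong refl)
       (simp add: deriv_funpow_wav_factor le_trans[OF count_le_length assms])
  finally show ?thesis .
qed

lemma pdiffs_scaled_wav_eq_0:
  fixes x :: "real^'n::finite"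
  assumes "length js \<le> S" and "real N < \<bar>2 ^ k * x$j - of_int (m j)\<bar>"
  shows "pdiffs js (\<lambda>x. c * wav \<phi> \<psi> k \<epsilon> m x) x = 0"
proof -
  have "(deriv ^^ count_list js j) (tensor_factor \<phi> \<psi> \<epsilon> j) (2 ^ k * x$j - of_int (m j)) = 0"
    using assms(2) by (rule tensor_factor_vanishes)
  then have "(\<Prod>j\<in>UNIV. (2 ^ k) ^ count_list js j *
      (deriv ^^ count_list js j) (tensor_factor \<phi> \<psi> \<epsilon> j) (2 ^ k * x$j - of_int (m j))) = 0"
    by (intro prod_zero) auto
  then show ?thesis
    unfolding pdiffs_scaled_wav[OF assms(1)] by (simp only: mult_zero_right)
qed

lemma pdiffs_scaled_wav_bound:
  fixes x :: "real^'n::finite"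
  assumes len: "length js \<le> S"
    and B: "\<And>n t. n \<le> S \<Longrightarrow> \<bar>(deriv ^^ n) \<phi> t\<bar> \<le> B \<and> \<bar>(deriv ^^ n) \<psi> t\<bar> \<le> B"
  shows "\<bar>pdiffs js (\<lambda>x. c * wav \<phi> \<psi> k \<epsilon> m x) x\<bar>
    \<le> \<bar>c\<bar> * 2 powr (real CARD('n) * real k / 2) * 2 ^ (k * length js) * B ^ CARD('n)"
proof -
  let ?g = "\<lambda>j. (deriv ^^ count_list js j) (tensor_factor \<phi> \<psi> \<epsilon> j) (2 ^ k * x$j - of_int (m j))"
  have "\<bar>?g j\<bar> \<le> B" for j
    using B[of "count_list js j"] count_le_length[of js j] len by (auto simp: tensor_factor_def)
  then have "(\<Prod>j\<in>UNIV. \<bar>?g j\<bar>) \<le> B ^ CARD('n)"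
    using prod_mono[of UNIV "\<lambda>j. \<bar>?g j\<bar>" "\<lambda>_. B"] by (simp add: prod_constant)
  moreover have "(\<Prod>j\<in>UNIV. ((2::real) ^ k) ^ count_list js j) = 2 ^ (k * length js)"
    by (simp add: power_sum[symmetric] sum_count_set power_mult)
  ultimately have "\<bar>\<Prod>j\<in>UNIV. (2 ^ k) ^ count_list js j * ?g j\<bar> \<le> 2 ^ (k * length js) * B ^ CARD('n)"
    by (simp add: abs_prod prod.distrib abs_mult)
  then show ?thesis
    unfolding pdiffs_scaled_wav[OF len] abs_mult by (simp add: mult.assoc mult_left_mono)
qed

lemma closure_wav_support_box:
  fixes y :: "real^'n::finite"
  assumes "y \<in> closure {x. wav \<phi> \<psi> k \<epsilon> m x \<noteq> 0}"
  shows "\<bar>2 ^ k * y$j - of_int (m j)\<bar> \<le> real N"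
proof -
  have "closed {x::real^'n. \<bar>2 ^ k * x$j - of_int (m j)\<bar> \<le> real N}"
    by (intro closed_Collect_le continuous_intros)
  moreover have "{x. wav \<phi> \<psi> k \<epsilon> m x \<noteq> 0} \<subseteq> {x::real^'n. \<bar>2 ^ k * x$j - of_int (m j)\<bar> \<le> real N}"
  proof (intro subsetI CollectI)
    fix x :: "real^'n" assume "x \<in> {x. wav \<phi> \<psi> k \<epsilon> m x \<noteq> 0}"
    moreover have "wav \<phi> \<psi> k \<epsilon> m x = 0" if "real N < \<bar>2 ^ k * x$j - of_int (m j)\<bar>"
      using pdiffs_scaled_wav_eq_0[where js = "[]" and c = 1 and k = k and \<epsilon> = \<epsilon> and m = m and x = x and j = j]
        that by simp
    ultimately show "\<bar>2 ^ k * x$j - of_int (m j)\<bar> \<le> real N"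
      by (meson mem_Collect_eq not_le)
  qed
  ultimately show ?thesis
    using closure_minimal assms by blast
qed

lemma finite_active_translations:
  "finite {(\<epsilon>::'n::finite\<Rightarrow>bool, m::'n\<Rightarrow>int). \<forall>j. \<bar>2 ^ k * x$j - of_int (m j)\<bar> \<le> real N}"
  and card_active_translations_le:
  "card {(\<epsilon>::'n::finite\<Rightarrow>bool, m::'n\<Rightarrow>int). \<forall>j. \<bar>2 ^ k * x$j - of_int (m j)\<bar> \<le> real N}
     \<le> 2 ^ CARD('n) * (2 * N + 1) ^ CARD('n)"
proof -
  let ?lo = "\<lambda>j. \<lfloor>2 ^ k * x$j\<rfloor> - int N"
  have box: "{(\<epsilon>::'n\<Rightarrow>bool, m::'n\<Rightarrow>int). \<forall>j. \<bar>2 ^ k * x$j - of_int (m j)\<bar> \<le> real N}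
     \<subseteq> {(\<epsilon>, m). \<forall>j. ?lo j \<le> m j \<and> m j \<le> ?lo j + int (2 * N)}"
  proof (clarify)
    fix \<epsilon> :: "'n \<Rightarrow> bool" and m :: "'n \<Rightarrow> int" and j
    assume "\<forall>j. \<bar>2 ^ k * x$j - of_int (m j)\<bar> \<le> real N"
    then have "\<bar>2 ^ k * x$j - of_int (m j)\<bar> \<le> real N" by blast
    moreover have "of_int \<lfloor>2 ^ k * x$j\<rfloor> \<le> 2 ^ k * x$j" "2 ^ k * x$j < of_int \<lfloor>2 ^ k * x$j\<rfloor> + 1"
      by linarith+
    ultimately show "?lo j \<le> m j \<and> m j \<le> ?lo j + int (2 * N)" by linarith
  qed
  show "finite {(\<epsilon>::'n\<Rightarrow>bool, m::'n\<Rightarrow>int). \<forall>j. \<bar>2 ^ k * x$j - of_int (m j)\<bar> \<le> real N}"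
    using finite_subset[OF box finite_lattice_box] .
  show "card {(\<epsilon>::'n\<Rightarrow>bool, m::'n\<Rightarrow>int). \<forall>j. \<bar>2 ^ k * x$j - of_int (m j)\<bar> \<le> real N}
     \<le> 2 ^ CARD('n) * (2 * N + 1) ^ CARD('n)"
    using card_mono[OF finite_lattice_box box] card_lattice_box_le[of ?lo "2 * N"] by simp
qed

end

locale compact_wavelet_domain = compact_wavelet_pair \<phi> \<psi> S N for \<phi> \<psi> S N +
  fixes Dom :: "(real^'n::finite) set" and D :: nat
  assumes Dom_box: "\<And>x j. x \<in> Dom \<Longrightarrow> \<bar>x$j\<bar> \<le> real D"
begin

lemma wav_index_translation_bound:
  assumes "(\<epsilon>, m) \<in> wav_index Dom \<phi> \<psi> (Suc k)"
  shows "\<bar>m j\<bar> \<le> int (2 ^ k * D + N)"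
proof -
  from assms obtain y where y: "y \<in> closure {x. wav \<phi> \<psi> k \<epsilon> m x \<noteq> 0}" "y \<in> Dom"
    unfolding wav_index_def by auto
  have "\<bar>2 ^ k * y$j\<bar> \<le> 2 ^ k * real D"
    using Dom_box[OF y(2)] by (simp add: abs_mult)
  then have "\<bar>real_of_int (m j)\<bar> \<le> 2 ^ k * real D + real N"
    using closure_wav_support_box[OF y(1), of j] by linarith
  also have "\<dots> = real_of_int (int (2 ^ k * D + N))" by simp
  finally show ?thesis by (simp only: of_int_abs[symmetric] of_int_le_iff)
qed

lemma finite_wav_index: "finite (wav_index Dom \<phi> \<psi> (Suc k))"
  and card_wav_index_le:
    "card (wav_index Dom \<phi> \<psi> (Suc k)) \<le> (2 * (2 * D + 2 * N + 1)) ^ CARD('n) * 2 ^ (CARD('n) * k)"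
proof -
  define R where "R = 2 ^ k * D + N"
  have "\<forall>j. - int R \<le> m j \<and> m j \<le> - int R + int (2 * R)" if "(\<epsilon>, m) \<in> wav_index Dom \<phi> \<psi> (Suc k)" for \<epsilon> m
  proof
    fix j
    have "\<bar>m j\<bar> \<le> int R" unfolding R_def by (rule wav_index_translation_bound[OF that])
    then show "- int R \<le> m j \<and> m j \<le> - int R + int (2 * R)" by linarith
  qed
  then have box: "wav_index Dom \<phi> \<psi> (Suc k) \<subseteq> {(\<epsilon>, m). \<forall>j. - int R \<le> m j \<and> m j \<le> - int R + int (2 * R)}"
    by auto
  then show "finite (wav_index Dom \<phi> \<psi> (Suc k))"
    by (rule finite_subset) (rule finite_lattice_box)
  have "card (wav_index Dom \<phi> \<psi> (Suc k)) \<le> 2 ^ CARD('n) * (2 * R + 1) ^ CARD('n)"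
    using card_mono[OF finite_lattice_box box] card_lattice_box_le[where lo = "\<lambda>_::'n. - int R" and L = "2 * R"] by simp
  also have "\<dots> \<le> 2 ^ CARD('n) * (2 ^ k * (2 * D + 2 * N + 1)) ^ CARD('n)"
  proof (intro mult_le_mono2 power_mono)
    have "1 * (2 * N + 1) \<le> 2 ^ k * (2 * N + 1)" by (intro mult_le_mono1) simp
    then show "2 * R + 1 \<le> 2 ^ k * (2 * D + 2 * N + 1)" unfolding R_def by (simp add: algebra_simps)
  qed simp
  also have "\<dots> = (2 * (2 * D + 2 * N + 1)) ^ CARD('n) * 2 ^ (CARD('n) * k)"
    by (simp only: power_mult_distrib mult.commute[of "CARD('n)" k] power_mult) (simp only: mult_ac)
  finally show "card (wav_index Dom \<phi> \<psi> (Suc k)) \<le> (2 * (2 * D + 2 * N + 1)) ^ CARD('n) * 2 ^ (CARD('n) * k)" .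
qed

end

lemma count_list_replicate: "count_list (replicate n a) i = (if a = i then n else 0)"
  by (induction n) auto

lemma exists_list_with_counts:
  fixes \<beta> :: "'a \<Rightarrow> nat"
  assumes "finite A"
  shows "\<exists>xs. set xs \<subseteq> A \<and> (\<forall>i\<in>A. count_list xs i = \<beta> i)"
  using assms
proof (induction A rule: finite_induct)
  case (insert a A)
  then obtain xs where xs: "set xs \<subseteq> A" "\<forall>i\<in>A. count_list xs i = \<beta> i" by blast
  then have "count_list xs a = 0" using insert(2) by (meson count_notin subsetD)
  then show ?case using xs insert(2)
    by (intro exI[of _ "replicate (\<beta> a) a @ xs"]) (auto simp: count_list_replicate)
qed simp

lemma count_list_mlist: "count_list (mlist (\<beta> :: 'n::finite \<Rightarrow> nat)) i = \<beta> i"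
proof -
  have "\<exists>xs. \<forall>i. count_list xs i = \<beta> i"
    using exists_list_with_counts[of "UNIV :: 'n set" \<beta>] by auto
  then have "\<forall>i. count_list (mlist \<beta>) i = \<beta> i"
    unfolding mlist_def by (rule someI_ex)
  then show ?thesis by blast
qed

lemma length_mlist: "length (mlist (\<beta> :: 'n::finite \<Rightarrow> nat)) = (\<Sum>i\<in>UNIV. \<beta> i)"
  using sum_count_set[of "mlist \<beta>" UNIV] by (simp add: count_list_mlist)

lemma card_multi_indices_le:
  "card {\<beta>::'n::finite\<Rightarrow>nat. (\<Sum>i\<in>UNIV. \<beta> i) \<le> b} \<le> (b + 1) ^ CARD('n)"
proof -
  have box: "{\<beta>::'n\<Rightarrow>nat. (\<Sum>i\<in>UNIV. \<beta> i) \<le> b} \<subseteq> PiE UNIV (\<lambda>_. {0..b})"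
  proof
    fix \<beta> :: "'n \<Rightarrow> nat" assume "\<beta> \<in> {\<beta>. (\<Sum>i\<in>UNIV. \<beta> i) \<le> b}"
    then have "\<beta> i \<le> b" for i using member_le_sum[of i UNIV \<beta>] by auto
    then show "\<beta> \<in> PiE UNIV (\<lambda>_. {0..b})" by (auto simp: PiE_UNIV_domain)
  qed
  have "card (PiE (UNIV::'n set) (\<lambda>_. {0..b})) = (b + 1) ^ CARD('n)"
    by (subst card_PiE) (simp_all add: prod_constant)
  then show ?thesis
    using card_mono[OF _ box] finite_PiE[of "UNIV::'n set" "\<lambda>_. {0..b}"] by simp
qed

lemma Cb_norm_le:
  fixes F :: "real^'n::finite \<Rightarrow> real"
  assumes "Ck_on UNIV b F" and "\<And>js x. length js \<le> b \<Longrightarrow> \<bar>pdiffs js F x\<bar> \<le> K" and "K \<ge> 0"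
  shows "Cb_norm b F \<le> ereal (real ((b + 1) ^ CARD('n)) * K)"
proof -
  let ?B = "{\<beta>::'n\<Rightarrow>nat. (\<Sum>i\<in>UNIV. \<beta> i) \<le> b}"
  have "(\<Sum>\<beta>\<in>?B. (SUP x. ereal \<bar>Dmulti \<beta> F x\<bar>)) \<le> (\<Sum>\<beta>\<in>?B. ereal K)"
  proof (rule sum_mono)
    fix \<beta> assume "\<beta> \<in> ?B"
    then have "length (mlist \<beta>) \<le> b" by (simp add: length_mlist)
    then show "(SUP x. ereal \<bar>Dmulti \<beta> F x\<bar>) \<le> ereal K"
      by (intro SUP_least) (simp add: Dmulti_def assms(2))
  qed
  also have "\<dots> = ereal (real (card ?B) * K)" by simp
  also have "\<dots> \<le> ereal (real ((b + 1) ^ CARD('n)) * K)"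
    using card_multi_indices_le[of b, where 'n = 'n] assms(3)
    by (simp only: ereal_less_eq) (intro mult_right_mono of_nat_mono)
  finally show ?thesis using assms(1) unfolding Cb_norm_def by simp
qed

section \<open>A deterministic bound for the prior draw\<close>

definition level_coef :: "real \<Rightarrow> (nat \<times> ('n::finite \<Rightarrow> bool) \<times> ('n \<Rightarrow> int) \<Rightarrow> real)
    \<Rightarrow> nat \<Rightarrow> ('n \<Rightarrow> bool) \<times> ('n \<Rightarrow> int) \<Rightarrow> real" where
  "level_coef \<alpha> \<xi> k a = 2 powr ((real CARD('n) / 2 - \<alpha>) * real (Suc k)) * \<xi> (Suc k, fst a, snd a)"

definition Ftilde_level :: "real \<Rightarrow> (real^'n::finite) set \<Rightarrow> (real \<Rightarrow> real) \<Rightarrow> (real \<Rightarrow> real)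
    \<Rightarrow> (nat \<times> ('n \<Rightarrow> bool) \<times> ('n \<Rightarrow> int) \<Rightarrow> real) \<Rightarrow> nat \<Rightarrow> real^'n \<Rightarrow> real" where
  "Ftilde_level \<alpha> Dom \<phi> \<psi> \<xi> k x =
     (\<Sum>a\<in>wav_index Dom \<phi> \<psi> (Suc k). level_coef \<alpha> \<xi> k a * wav \<phi> \<psi> k (fst a) (snd a) x)"

lemma Ftilde_eq_suminf_levels: "Ftilde \<alpha> Dom \<phi> \<psi> \<xi> = (\<lambda>x. \<Sum>k. Ftilde_level \<alpha> Dom \<phi> \<psi> \<xi> k x)"
  unfolding Ftilde_def Ftilde_level_def level_coef_def split_def by (simp add: mult.assoc)

text \<open>The prior indexes the dilation level \<open>k\<close> as \<open>k + 1\<close>, hence the exponent \<open>Suc k\<close>.\<close>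

lemma wavelet_scaling_le_half_pow:
  assumes "len \<le> b" and "real b + real d + 1 \<le> real \<alpha>"
  shows "2 powr ((real d / 2 - real \<alpha>) * real (Suc k)) * 2 powr (real d * real k / 2) * 2 ^ (k * len)
    \<le> (1/2::real) ^ k"
proof -
  define E where "E = (real d / 2 - real \<alpha>) * real (Suc k) + real d * real k / 2 + real k * real len"
  have lhs: "2 powr ((real d / 2 - real \<alpha>) * real (Suc k)) * 2 powr (real d * real k / 2) * 2 ^ (k * len)
      = 2 powr E"
    unfolding E_def by (simp add: powr_add powr_realpow[symmetric])
  have rhs: "(1/2::real) ^ k = 2 powr (- real k)"
    by (simp add: powr_minus powr_realpow power_one_over inverse_eq_divide)
  have "real k * real len \<le> real k * real b" using assms(1) by (intro mult_left_mono) auto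
  moreover have "real k * (real d - real \<alpha> + real b + 1) \<le> 0"
    using assms(2) by (intro mult_nonneg_nonpos) auto
  moreover have "E = real k * (real d - real \<alpha> + real b + 1) + (real k * real len - real k * real b)
      + (real d / 2 - real \<alpha>) - real k"
    unfolding E_def by (simp add: field_simps)
  ultimately have "E \<le> - real k" using assms(2) by linarith
  then show ?thesis unfolding lhs rhs by simp
qed

context compact_wavelet_domain
begin

lemma Ck_on_Ftilde_level: "b \<le> S \<Longrightarrow> Ck_on UNIV b (Ftilde_level \<alpha> Dom \<phi> \<psi> \<xi> k)"
  unfolding Ftilde_level_def[abs_def] by (rule Ck_on_sum) (rule Ck_on_scaled_wav)

context
  fixes B :: real and b \<alpha> :: nat
  assumes derivatives_le_B: "\<And>n t. n \<le> S \<Longrightarrow> \<bar>(deriv ^^ n) \<phi> t\<bar> \<le> B \<and> \<bar>(deriv ^^ n) \<psi> t\<bar> \<le> B"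
    and B_ge_1: "B \<ge> 1" and b_le_S: "b \<le> S" and b_\<alpha>: "real b + real CARD('n) + 1 \<le> real \<alpha>"
begin

lemma pdiffs_level_term_bound:
  fixes x :: "real^'n"
  assumes "\<bar>\<xi> (Suc k, fst a, snd a)\<bar> \<le> T * (3/2) ^ k" and "length js \<le> b"
  shows "\<bar>pdiffs js (\<lambda>x. level_coef \<alpha> \<xi> k a * wav \<phi> \<psi> k (fst a) (snd a) x) x\<bar>
    \<le> B ^ CARD('n) * T * (3/4) ^ k"
proof -
  let ?s = "2 powr ((real CARD('n) / 2 - real \<alpha>) * real (Suc k)) * 2 powr (real CARD('n) * real k / 2)
    * 2 ^ (k * length js)"
  have len: "length js \<le> S" using assms(2) b_le_S by simp
  have "\<bar>pdiffs js (\<lambda>x. level_coef \<alpha> \<xi> k a * wav \<phi> \<psi> k (fst a) (snd a) x) x\<bar>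
      \<le> \<bar>level_coef \<alpha> \<xi> k a\<bar> * 2 powr (real CARD('n) * real k / 2) * 2 ^ (k * length js) * B ^ CARD('n)"
    by (rule pdiffs_scaled_wav_bound[OF len derivatives_le_B])
  also have "\<dots> = ?s * (\<bar>\<xi> (Suc k, fst a, snd a)\<bar> * B ^ CARD('n))"
    by (simp add: level_coef_def abs_mult mult_ac)
  also have "\<dots> \<le> (1/2) ^ k * (T * (3/2) ^ k * B ^ CARD('n))"
  proof (rule mult_mono)
    show "?s \<le> (1/2) ^ k" by (rule wavelet_scaling_le_half_pow[OF assms(2) b_\<alpha>])
    show "\<bar>\<xi> (Suc k, fst a, snd a)\<bar> * B ^ CARD('n) \<le> T * (3/2) ^ k * B ^ CARD('n)"
      using assms(1) B_ge_1 by (intro mult_right_mono) simp_all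
  qed (use B_ge_1 in simp_all)
  also have "\<dots> = B ^ CARD('n) * T * (3/4) ^ k"
    by (simp add: power_mult_distrib[symmetric])
  finally show ?thesis .
qed

text \<open>Only the wavelets of level \<open>k\<close> that do not vanish at \<open>x\<close> contribute, and there are at most
  \<open>2\<^sup>d (2N + 1)\<^sup>d\<close> of them.\<close>

lemma pdiffs_Ftilde_level_bound:
  fixes x :: "real^'n"
  assumes "\<forall>a\<in>wav_index Dom \<phi> \<psi> (Suc k). \<bar>\<xi> (Suc k, fst a, snd a)\<bar> \<le> T * (3/2) ^ k"
    and "T \<ge> 0" and "length js \<le> b"
  shows "\<bar>pdiffs js (Ftilde_level \<alpha> Dom \<phi> \<psi> \<xi> k) x\<bar>
    \<le> (2 ^ CARD('n) * (2 * real N + 1) ^ CARD('n) * B ^ CARD('n)) * T * (3/4) ^ k"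
proof -
  let ?W = "wav_index Dom \<phi> \<psi> (Suc k)"
  let ?Z = "{(\<epsilon>::'n\<Rightarrow>bool, m::'n\<Rightarrow>int). \<forall>j. \<bar>2 ^ k * x$j - of_int (m j)\<bar> \<le> real N}"
  let ?Q = "B ^ CARD('n) * T * (3/4) ^ k"
  define p where "p a = pdiffs js (\<lambda>x. level_coef \<alpha> \<xi> k a * wav \<phi> \<psi> k (fst a) (snd a) x) x" for a
  have len: "length js \<le> S" using assms(3) b_le_S by simp
  have "pdiffs js (Ftilde_level \<alpha> Dom \<phi> \<psi> \<xi> k) x = (\<Sum>a\<in>?W. p a)"
  proof -
    have "pdiffs js (\<lambda>x. \<Sum>a\<in>?W. level_coef \<alpha> \<xi> k a * wav \<phi> \<psi> k (fst a) (snd a) x)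
        = (\<lambda>x. \<Sum>a\<in>?W. pdiffs js (\<lambda>x. level_coef \<alpha> \<xi> k a * wav \<phi> \<psi> k (fst a) (snd a) x) x)"
      by (rule pdiffs_sum[OF Ck_on_scaled_wav[OF b_le_S] assms(3)])
    then show ?thesis by (simp add: Ftilde_level_def[abs_def] p_def)
  qed
  also have "\<dots> = (\<Sum>a\<in>?W \<inter> ?Z. p a)"
  proof (rule sum.mono_neutral_right[OF finite_wav_index])
    show "\<forall>a\<in>?W - ?W \<inter> ?Z. p a = 0"
    proof
      fix a assume "a \<in> ?W - ?W \<inter> ?Z"
      then obtain j where "real N < \<bar>2 ^ k * x$j - of_int (snd a j)\<bar>"
        by (auto simp: not_le split: prod.splits)
      then show "p a = 0" unfolding p_def by (rule pdiffs_scaled_wav_eq_0[OF len])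
    qed
  qed auto
  also have "\<bar>\<dots>\<bar> \<le> (\<Sum>a\<in>?W \<inter> ?Z. \<bar>p a\<bar>)" by (rule sum_abs)
  also have "\<dots> \<le> (\<Sum>a\<in>?W \<inter> ?Z. ?Q)"
  proof (rule sum_mono)
    fix a assume "a \<in> ?W \<inter> ?Z"
    then show "\<bar>p a\<bar> \<le> ?Q"
      unfolding p_def using assms by (intro pdiffs_level_term_bound) auto
  qed
  also have "\<dots> = real (card (?W \<inter> ?Z)) * ?Q" by simp
  also have "\<dots> \<le> real (2 ^ CARD('n) * (2 * N + 1) ^ CARD('n)) * ?Q"
  proof (rule mult_right_mono)
    have "card (?W \<inter> ?Z) \<le> card ?Z"
      by (rule card_mono[OF finite_active_translations]) auto
    then show "real (card (?W \<inter> ?Z)) \<le> real (2 ^ CARD('n) * (2 * N + 1) ^ CARD('n))"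
      using card_active_translations_le[of k x] by linarith
    show "0 \<le> ?Q" using B_ge_1 assms(2) by simp
  qed
  finally show ?thesis by (simp add: ac_simps)
qed

lemma Cb_norm_Ftilde_le:
  assumes "\<And>k. \<forall>a\<in>wav_index Dom \<phi> \<psi> (Suc k). \<bar>\<xi> (Suc k, fst a, snd a)\<bar> \<le> T * (3/2) ^ k"
    and "T \<ge> 0"
  shows "Cb_norm b (Ftilde \<alpha> Dom \<phi> \<psi> \<xi>)
    \<le> ereal (real ((b + 1) ^ CARD('n)) * (2 ^ CARD('n) * (2 * real N + 1) ^ CARD('n) * B ^ CARD('n)) * 4 * T)"
proof -
  define K where "K = 2 ^ CARD('n) * (2 * real N + 1) ^ CARD('n) * B ^ CARD('n)"
  define M where "M k = K * T * (3/4) ^ k" for k :: nat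
  have bound: "\<And>k (js::'n list) x. length js \<le> b \<Longrightarrow> \<bar>pdiffs js (Ftilde_level \<alpha> Dom \<phi> \<psi> \<xi> k) x\<bar> \<le> M k"
    unfolding M_def K_def by (rule pdiffs_Ftilde_level_bound[OF assms(1,2)])
  have geometric: "summable (\<lambda>k. (3/4::real) ^ k)" by (rule summable_geometric) simp
  have summable_M: "summable M" unfolding M_def by (rule summable_mult[OF geometric])
  have sum_M: "(\<Sum>k. M k) = K * T * 4"
    unfolding M_def using suminf_mult[OF geometric, of "K * T"] suminf_geometric[of "3/4::real"] by simp
  note level_Ck = Ck_on_Ftilde_level[OF b_le_S]
  have "Cb_norm b (\<lambda>x. \<Sum>k. Ftilde_level \<alpha> Dom \<phi> \<psi> \<xi> k x) \<le> ereal (real ((b + 1) ^ CARD('n)) * (K * T * 4))"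
  proof (rule Cb_norm_le)
    show "Ck_on UNIV b (\<lambda>x. \<Sum>k. Ftilde_level \<alpha> Dom \<phi> \<psi> \<xi> k x)"
      by (rule Ck_on_suminf[OF level_Ck bound summable_M])
    show "\<bar>pdiffs js (\<lambda>x. \<Sum>k. Ftilde_level \<alpha> Dom \<phi> \<psi> \<xi> k x) x\<bar> \<le> K * T * 4" if "length js \<le> b" for js x
      using pdiffs_suminf_bound[OF level_Ck bound summable_M that] sum_M by simp
    show "0 \<le> K * T * 4" unfolding K_def using B_ge_1 assms(2) by simp
  qed
  then show ?thesis unfolding Ftilde_eq_suminf_levels K_def by (simp add: mult_ac)
qed

end

end

section \<open>Tails of the Laplace prior\<close>

lemma emeasure_laplace:
  "A \<in> sets borel \<Longrightarrow> emeasure laplace A = (\<integral>\<^sup>+x. ennreal (exp (- \<bar>x\<bar>) / 2) * indicator A x \<partial>lborel)"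
  unfolding laplace_def by (subst emeasure_density) auto

lemma nn_integral_laplace_density_Ioi:
  fixes T :: real assumes "T \<ge> 0"
  shows "(\<integral>\<^sup>+x. ennreal (exp (- \<bar>x\<bar>) / 2) * indicator {T<..} x \<partial>lborel) = ennreal (exp (-T) / 2)"
proof -
  have "AE x in lborel. x \<noteq> T" by (rule AE_lborel_singleton)
  then have "(\<integral>\<^sup>+x. ennreal (exp (- \<bar>x\<bar>) / 2) * indicator {T<..} x \<partial>lborel)
      = (\<integral>\<^sup>+x. ennreal (if x \<in> {T..} then exp (- x) / 2 else 0) \<partial>lborel)"
    using assms by (intro nn_integral_cong_AE) (auto simp: indicator_def)
  also have "\<dots> = ennreal (exp (-T) / 2)"
  proof (rule nn_integral_has_integral_lborel)
    have "((\<lambda>x::real. exp (-1*x) / 2) has_integral exp (-1*T)/1 / 2) {T..}"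
      by (rule has_integral_divide[OF has_integral_exp_minus_to_infinity]) simp
    then show "((\<lambda>x. if x \<in> {T..} then exp (- x) / 2 else 0) has_integral exp (- T) / 2) UNIV"
      by (subst has_integral_restrict_UNIV) simp
  qed auto
  finally show ?thesis .
qed

lemma nn_integral_laplace_density_reflect:
  fixes A :: "real set" assumes [measurable]: "A \<in> sets borel"
  shows "(\<integral>\<^sup>+x. ennreal (exp (- \<bar>x\<bar>) / 2) * indicator A x \<partial>lborel)
       = (\<integral>\<^sup>+x. ennreal (exp (- \<bar>x\<bar>) / 2) * indicator (uminus ` A) x \<partial>lborel)"
proof -
  have "(\<integral>\<^sup>+x. ennreal (exp (- \<bar>x\<bar>) / 2) * indicator A x \<partial>lborel)
     = ennreal \<bar>-1\<bar> * (\<integral>\<^sup>+x. ennreal (exp (- \<bar>0 + (-1) * x\<bar>) / 2) * indicator A (0 + (-1) * x) \<partial>lborel)"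
    by (rule nn_integral_real_affine) auto
  also have "\<dots> = (\<integral>\<^sup>+x. ennreal (exp (- \<bar>x\<bar>) / 2) * indicator (uminus ` A) x \<partial>lborel)"
  proof -
    have "x \<in> uminus ` A \<longleftrightarrow> - x \<in> A" for x
      by (metis add.inverse_inverse image_eqI imageE)
    then show ?thesis by (simp add: indicator_def)
  qed
  finally show ?thesis .
qed

lemma emeasure_laplace_abs_greater:
  fixes T :: real assumes "T \<ge> 0"
  shows "emeasure laplace {x. T < \<bar>x\<bar>} = ennreal (exp (-T))"
proof -
  let ?I = "\<lambda>A. \<integral>\<^sup>+x. ennreal (exp (- \<bar>x\<bar>) / 2) * indicator A x \<partial>lborel"
  have "emeasure laplace {x. T < \<bar>x\<bar>} = ?I {x. T < \<bar>x\<bar>}"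
    by (rule emeasure_laplace) measurable
  also have "\<dots> = (\<integral>\<^sup>+x. ennreal (exp (- \<bar>x\<bar>) / 2) * indicator {T<..} x
       + ennreal (exp (- \<bar>x\<bar>) / 2) * indicator {..<-T} x \<partial>lborel)"
    using assms by (intro nn_integral_cong) (auto simp: indicator_def)
  also have "\<dots> = ?I {T<..} + ?I {..<-T}"
    by (rule nn_integral_add) auto
  also have "?I {..<-T} = ?I {T<..}"
  proof -
    have "uminus ` {..<-T} = {T<..}"
      by (auto simp: image_iff intro!: exI[of _ "- _"])
    then show ?thesis using nn_integral_laplace_density_reflect[of "{..<-T}"] by simp
  qed
  also have "?I {T<..} + ?I {T<..} = ennreal (exp (-T))"
    using nn_integral_laplace_density_Ioi[OF assms] by (simp flip: ennreal_plus)
  finally show ?thesis .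
qed

lemma prob_space_laplace: "prob_space laplace"
proof
  let ?I = "\<lambda>A. \<integral>\<^sup>+x. ennreal (exp (- \<bar>x\<bar>) / 2) * indicator A x \<partial>lborel"
  have "emeasure laplace UNIV = ?I UNIV" by (rule emeasure_laplace) simp
  also have "\<dots> = ?I {x. 0 < \<bar>x\<bar>}"
  proof (rule nn_integral_cong_AE)
    show "AE x in lborel. ennreal (exp (- \<bar>x\<bar>) / 2) * indicator UNIV x
        = ennreal (exp (- \<bar>x\<bar>) / 2) * indicator {x. 0 < \<bar>x\<bar>} x"
      using AE_lborel_singleton[of 0] by eventually_elim (auto simp: indicator_def)
  qed
  also have "\<dots> = emeasure laplace {x. 0 < \<bar>x\<bar>}" by (rule emeasure_laplace[symmetric]) measurable
  also have "\<dots> = 1" using emeasure_laplace_abs_greater[of 0] by simp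
  finally show "emeasure laplace (space laplace) = 1" by (simp add: laplace_def)
qed

lemma prob_space_coef_law: "prob_space (coef_law Dom \<phi> \<psi>)"
  unfolding coef_law_def by (rule prob_space_PiM) (rule prob_space_laplace)

lemma coef_law_coordinate_tail:
  assumes "i \<in> coef_index Dom \<phi> \<psi>" and "t \<ge> 0"
  shows "{\<xi>\<in>space (coef_law Dom \<phi> \<psi>). t < \<bar>\<xi> i\<bar>} \<in> sets (coef_law Dom \<phi> \<psi>)"
    and "emeasure (coef_law Dom \<phi> \<psi>) {\<xi>\<in>space (coef_law Dom \<phi> \<psi>). t < \<bar>\<xi> i\<bar>} = ennreal (exp (- t))"
proof -
  interpret product_prob_space "\<lambda>_. laplace" "coef_index Dom \<phi> \<psi>"
    by (intro product_prob_spaceI prob_space_laplace)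
  have sets_laplace: "sets laplace = sets borel" and space_laplace: "space laplace = UNIV"
    by (simp_all add: laplace_def)
  have set_eq: "{\<xi>\<in>space (coef_law Dom \<phi> \<psi>). t < \<bar>\<xi> i\<bar>}
      = {\<xi>\<in>space (PiM (coef_index Dom \<phi> \<psi>) (\<lambda>_. laplace)). \<xi> i \<in> {x. t < \<bar>x\<bar>}}"
    by (simp add: coef_law_def)
  show "{\<xi>\<in>space (coef_law Dom \<phi> \<psi>). t < \<bar>\<xi> i\<bar>} \<in> sets (coef_law Dom \<phi> \<psi>)"
    unfolding set_eq unfolding coef_law_def
    by (rule sets_Collect_single'[OF assms(1)]) (simp add: sets_laplace space_laplace)
  show "emeasure (coef_law Dom \<phi> \<psi>) {\<xi>\<in>space (coef_law Dom \<phi> \<psi>). t < \<bar>\<xi> i\<bar>} = ennreal (exp (- t))"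
    unfolding set_eq unfolding coef_law_def
    by (subst emeasure_PiM_Collect_single[OF assms(1)])
       (simp_all add: sets_laplace emeasure_laplace_abs_greater assms(2))
qed

definition large_coefficients :: "(real^'n::finite) set \<Rightarrow> (real \<Rightarrow> real) \<Rightarrow> (real \<Rightarrow> real) \<Rightarrow> real
    \<Rightarrow> (nat \<times> ('n \<Rightarrow> bool) \<times> ('n \<Rightarrow> int) \<Rightarrow> real) set" where
  "large_coefficients Dom \<phi> \<psi> T = {\<xi>\<in>space (coef_law Dom \<phi> \<psi>).
     \<exists>k. \<exists>a\<in>wav_index Dom \<phi> \<psi> (Suc k). T * (3/2) ^ k < \<bar>\<xi> (Suc k, fst a, snd a)\<bar>}"

lemma one_plus_half_le_three_halves_power: "1 + real k / 2 \<le> (3/2::real) ^ k"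
proof (induction k)
  case (Suc k)
  have "1 + real (Suc k) / 2 \<le> 3/2 * (1 + real k / 2)" by simp
  also have "\<dots> \<le> 3/2 * (3/2) ^ k" using Suc by simp
  finally show ?case by simp
qed simp

lemma two_power_le_exp: "(2::real) ^ n \<le> exp (real n)"
proof -
  have "(2::real) ^ n \<le> exp 1 ^ n"
    using exp_ge_add_one_self[of 1] by (intro power_mono) simp_all
  also have "\<dots> = exp (real n)" using exp_of_nat_mult[of n "1::real"] by simp
  finally show ?thesis .
qed

text \<open>Level \<open>k\<close> has \<open>O(2\<^sup>d\<^sup>k)\<close> coefficients, each exceeding \<open>T (3/2)\<^sup>k\<close> with probability
  \<open>exp (- T (3/2)\<^sup>k) \<le> exp (- T) exp (- T k/2)\<close>; for \<open>T \<ge> 2 (d + 1)\<close> the product is geometric in \<open>k\<close>.\<close>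

lemma level_tail_le:
  fixes T K c :: real
  assumes "T \<ge> 2 * (real d + 1)" and "c \<le> K * 2 ^ (d * k)" and "0 \<le> c" and "K \<ge> 0"
  shows "c * exp (- T * (3/2) ^ k) \<le> K * exp (- T) * (1/2) ^ k"
proof -
  have "T * (1 + real k / 2) \<le> T * (3/2) ^ k"
    using one_plus_half_le_three_halves_power[of k] assms(1) by (intro mult_left_mono) simp_all
  then have "exp (- T * (3/2) ^ k) \<le> exp (- T * (1 + real k / 2))" by simp
  also have "\<dots> = exp (- T) * exp (- T / 2) ^ k"
  proof -
    have "- T * (1 + real k / 2) = - T + real k * (- T / 2)" by (simp add: algebra_simps)
    then show ?thesis by (simp only: exp_add exp_of_nat_mult)
  qed
  finally have decay: "exp (- T * (3/2) ^ k) \<le> exp (- T) * exp (- T / 2) ^ k" .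
  have "exp (real (d + 1)) \<le> exp (T / 2)" using assms(1) by simp
  then have "2 ^ (d + 1) \<le> exp (T / 2)" using two_power_le_exp[of "d + 1"] by linarith
  then have "2 ^ (d + 1) * exp (- T / 2) \<le> exp (T / 2) * exp (- T / 2)"
    by (rule mult_right_mono) simp
  also have "exp (T / 2) * exp (- T / 2) = 1" by (simp flip: exp_add)
  finally have ratio: "2 ^ d * exp (- T / 2) \<le> 1/2" by simp
  have "c * exp (- T * (3/2) ^ k) \<le> (K * 2 ^ (d * k)) * (exp (- T) * exp (- T / 2) ^ k)"
    using assms(2-4) decay by (intro mult_mono) simp_all
  also have "\<dots> = K * exp (- T) * (2 ^ d * exp (- T / 2)) ^ k"
    by (simp add: power_mult power_mult_distrib mult_ac)
  also have "\<dots> \<le> K * exp (- T) * (1/2) ^ k"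
    using assms(4) ratio by (intro mult_left_mono power_mono) simp_all
  finally show ?thesis .
qed

context compact_wavelet_domain
begin

lemma large_coefficients_measurable_bound:
  assumes "T \<ge> 2 * (real CARD('n) + 1)"
  shows "large_coefficients Dom \<phi> \<psi> T \<in> sets (coef_law Dom \<phi> \<psi>)"
    and "measure (coef_law Dom \<phi> \<psi>) (large_coefficients Dom \<phi> \<psi> T)
      \<le> 2 * real ((2 * (2 * D + 2 * N + 1)) ^ CARD('n)) * exp (- T)"
proof -
  let ?M = "coef_law Dom \<phi> \<psi>" and ?W = "\<lambda>k. wav_index Dom \<phi> \<psi> (Suc k)"
  interpret prob_space ?M by (rule prob_space_coef_law)
  define K where "K = real ((2 * (2 * D + 2 * N + 1)) ^ CARD('n))"
  define F where "F k a = {\<xi>\<in>space ?M. T * (3/2) ^ k < \<bar>\<xi> (Suc k, fst a, snd a)\<bar>}"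
    for k and a :: "('n \<Rightarrow> bool) \<times> ('n \<Rightarrow> int)"
  have T: "T \<ge> 0" using assms by simp
  have large_eq: "large_coefficients Dom \<phi> \<psi> T = (\<Union>k. \<Union>a\<in>?W k. F k a)"
    by (auto simp: large_coefficients_def F_def)
  have index: "(Suc k, fst a, snd a) \<in> coef_index Dom \<phi> \<psi>" if "a \<in> ?W k" for k a
    using that unfolding coef_index_def by auto
  have F_sets: "F k a \<in> sets ?M" and F_emeasure: "emeasure ?M (F k a) = ennreal (exp (- (T * (3/2) ^ k)))"
    if "a \<in> ?W k" for k a
    using coef_law_coordinate_tail[OF index[OF that], of "T * (3/2) ^ k"] T unfolding F_def by simp_all
  have level_sets: "(\<Union>a\<in>?W k. F k a) \<in> sets ?M" for k
    by (rule sets.finite_UN[OF finite_wav_index F_sets])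
  have level_bound: "emeasure ?M (\<Union>a\<in>?W k. F k a) \<le> ennreal (K * exp (- T) * (1/2) ^ k)" for k
  proof -
    have "emeasure ?M (\<Union>a\<in>?W k. F k a) \<le> (\<Sum>a\<in>?W k. emeasure ?M (F k a))"
      by (rule emeasure_subadditive_finite[OF finite_wav_index]) (use F_sets in auto)
    also have "\<dots> = ennreal (real (card (?W k)) * exp (- (T * (3/2) ^ k)))"
      by (simp add: F_emeasure ennreal_mult ennreal_of_nat_eq_real_of_nat)
    also have "\<dots> \<le> ennreal (K * exp (- T) * (1/2) ^ k)"
    proof (rule ennreal_leI)
      have "real (card (?W k)) \<le> real ((2 * (2 * D + 2 * N + 1)) ^ CARD('n) * 2 ^ (CARD('n) * k))"
        using card_wav_index_le[of k] by (simp only: of_nat_le_iff)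
      then have "real (card (?W k)) \<le> K * 2 ^ (CARD('n) * k)" unfolding K_def by simp
      from level_tail_le[OF assms this]
      show "real (card (?W k)) * exp (- (T * (3/2) ^ k)) \<le> K * exp (- T) * (1/2) ^ k"
        unfolding K_def by simp
    qed
    finally show ?thesis .
  qed
  show "large_coefficients Dom \<phi> \<psi> T \<in> sets ?M"
    unfolding large_eq using level_sets by auto
  have geometric: "summable (\<lambda>k. (1/2::real) ^ k)" by (rule summable_geometric) simp
  have "emeasure ?M (large_coefficients Dom \<phi> \<psi> T) \<le> (\<Sum>k. emeasure ?M (\<Union>a\<in>?W k. F k a))"
    unfolding large_eq by (rule emeasure_subadditive_countably) (use level_sets in auto)
  also have "\<dots> \<le> (\<Sum>k. ennreal (K * exp (- T) * (1/2) ^ k))"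
    by (rule suminf_le[OF level_bound summableI summableI])
  also have "\<dots> = ennreal (\<Sum>k. K * exp (- T) * (1/2) ^ k)"
    by (rule suminf_ennreal2) (simp_all add: K_def summable_mult[OF geometric])
  also have "(\<Sum>k. K * exp (- T) * (1/2::real) ^ k) = 2 * K * exp (- T)"
    using suminf_mult[OF geometric, of "K * exp (- T)"] suminf_geometric[of "1/2::real"] by simp
  finally show "measure ?M (large_coefficients Dom \<phi> \<psi> T) \<le> 2 * K * exp (- T)"
    using emeasure_eq_measure by (simp add: K_def ennreal_le_iff)
qed

lemma Cb_norm_Ftilde_linear_bound:
  assumes "b \<le> S" and "real b + real CARD('n) + 1 \<le> real \<alpha>"
  shows "\<exists>C>0. \<forall>T \<xi>. T \<ge> 0 \<longrightarrow> \<xi> \<in> space (coef_law Dom \<phi> \<psi>) \<longrightarrow>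
    \<xi> \<notin> large_coefficients Dom \<phi> \<psi> T \<longrightarrow> Cb_norm b (Ftilde \<alpha> Dom \<phi> \<psi> \<xi>) \<le> ereal (C * T)"
proof -
  obtain B where B: "B \<ge> 1" "\<And>n t. n \<le> S \<Longrightarrow> \<bar>(deriv ^^ n) \<phi> t\<bar> \<le> B \<and> \<bar>(deriv ^^ n) \<psi> t\<bar> \<le> B"
    by (rule derivatives_bounded) auto
  define C where "C = real ((b + 1) ^ CARD('n)) * (2 ^ CARD('n) * (2 * real N + 1) ^ CARD('n) * B ^ CARD('n)) * 4"
  have "C > 0" unfolding C_def using B(1) by simp
  moreover have "Cb_norm b (Ftilde \<alpha> Dom \<phi> \<psi> \<xi>) \<le> ereal (C * T)"
    if "T \<ge> 0" "\<xi> \<in> space (coef_law Dom \<phi> \<psi>)" "\<xi> \<notin> large_coefficients Dom \<phi> \<psi> T" for T \<xi>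
    using Cb_norm_Ftilde_le[OF B(2,1) assms, of \<xi> T] that
    by (auto simp: large_coefficients_def C_def not_less mult_ac)
  ultimately show ?thesis by blast
qed

end

lemma bounded_support_vanishes_outside:
  fixes g :: "real \<Rightarrow> real"
  assumes "bounded {t. g t \<noteq> 0}"
  obtains N :: nat where "\<And>t. real N < \<bar>t\<bar> \<Longrightarrow> g t = 0"
proof -
  obtain a where a: "\<forall>t\<in>{t. g t \<noteq> 0}. norm t \<le> a" using assms bounded_iff by blast
  have "g t = 0" if "real (nat \<lceil>a\<rceil>) < \<bar>t\<bar>" for t
  proof (rule ccontr)
    assume "g t \<noteq> 0"
    then have "\<bar>t\<bar> \<le> a" using a by auto
    then show False using that real_nat_ceiling_ge[of a] by linarith
  qed
  then show thesis by (rule that)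
qed

lemma bounded_components_le:
  fixes A :: "(real^'n) set"
  assumes "bounded A"
  obtains D :: nat where "\<And>x j. x \<in> A \<Longrightarrow> \<bar>x$j\<bar> \<le> real D"
proof -
  obtain a where a: "\<forall>x\<in>A. norm x \<le> a" using assms bounded_iff by blast
  have "\<bar>x$j\<bar> \<le> real (nat \<lceil>a\<rceil>)" if "x \<in> A" for x j
  proof -
    have "norm x \<le> a" using a that by blast
    then show ?thesis using component_le_norm_cart[of x j] real_nat_ceiling_ge[of a] by linarith
  qed
  then show thesis by (rule that)
qed

text \<open>Small radii are absorbed into the constant, since probabilities never exceed \<open>1\<close>.\<close>

lemma exp_tail_all_radii:
  assumes "prob_space M" and "\<rho> > 0"
    and "\<And>r. r \<ge> r\<^sub>0 \<Longrightarrow> \<exists>A\<in>sets M. E r \<subseteq> A \<and> measure M A \<le> K * exp (- \<rho> * r)"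
    and "\<And>r. E r \<subseteq> space M"
  shows "\<exists>c. c > 0 \<and> (\<forall>r>0. \<exists>A\<in>sets M. E r \<subseteq> A \<and> measure M A \<le> c * exp (- \<rho> * r))"
proof (intro exI conjI allI impI)
  let ?c = "max K (exp (\<rho> * r\<^sub>0))"
  show "?c > 0" by (simp add: less_max_iff_disj)
  fix r :: real
  show "\<exists>A\<in>sets M. E r \<subseteq> A \<and> measure M A \<le> ?c * exp (- \<rho> * r)"
  proof (cases "r \<ge> r\<^sub>0")
    case True
    then show ?thesis
      using assms(3)[OF True] by (smt (verit) exp_gt_zero max.cobounded1 mult_right_mono)
  next
    case False
    have "measure M (space M) = 1" using assms(1) by (rule prob_space.prob_space)
    also have "\<dots> \<le> exp (\<rho> * r\<^sub>0) * exp (- \<rho> * r)"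
      using False assms(2) by (simp flip: exp_add)
    also have "\<dots> \<le> ?c * exp (- \<rho> * r)" by (intro mult_right_mono) simp_all
    finally show ?thesis using assms(4) by blast
  qed
qed

lemma (in compact_wavelet_domain) Cb_norm_Ftilde_exp_tail:
  assumes "b \<le> S" and "real b + real CARD('n) + 1 \<le> real \<alpha>"
  shows "\<exists>c \<rho>. c > 0 \<and> \<rho> > 0 \<and> (\<forall>r>0. \<exists>A\<in>sets (coef_law Dom \<phi> \<psi>).
    {\<xi>\<in>space (coef_law Dom \<phi> \<psi>). Cb_norm b (Ftilde \<alpha> Dom \<phi> \<psi> \<xi>) \<ge> ereal r} \<subseteq> A \<and>
    measure (coef_law Dom \<phi> \<psi>) A \<le> c * exp (- \<rho> * r))"
proof -
  obtain C where "C > 0" and C: "\<And>T \<xi>. T \<ge> 0 \<Longrightarrow> \<xi> \<in> space (coef_law Dom \<phi> \<psi>) \<Longrightarrow>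
      \<xi> \<notin> large_coefficients Dom \<phi> \<psi> T \<Longrightarrow> Cb_norm b (Ftilde \<alpha> Dom \<phi> \<psi> \<xi>) \<le> ereal (C * T)"
    using Cb_norm_Ftilde_linear_bound[OF assms] by blast
  define \<rho> where "\<rho> = 1 / (2 * C)"
  have \<rho>: "\<rho> > 0" using \<open>C > 0\<close> by (simp add: \<rho>_def)
  let ?K = "2 * real ((2 * (2 * D + 2 * N + 1)) ^ CARD('n))"
  let ?E = "\<lambda>r. {\<xi>\<in>space (coef_law Dom \<phi> \<psi>). Cb_norm b (Ftilde \<alpha> Dom \<phi> \<psi> \<xi>) \<ge> ereal r}"
  have "\<exists>A\<in>sets (coef_law Dom \<phi> \<psi>). ?E r \<subseteq> A \<and> measure (coef_law Dom \<phi> \<psi>) A \<le> ?K * exp (- \<rho> * r)"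
    if "r \<ge> 2 * (real CARD('n) + 1) / \<rho>" for r
  proof (rule bexI[where x = "large_coefficients Dom \<phi> \<psi> (\<rho> * r)"], intro conjI)
    have T: "\<rho> * r \<ge> 2 * (real CARD('n) + 1)" using that \<rho> by (simp add: pos_divide_le_eq mult.commute)
    have "0 < \<rho> * r" by (rule order_less_le_trans[OF _ T]) simp
    then have "r > 0" using \<rho> by (simp add: zero_less_mult_iff)
    then have "C * (\<rho> * r) < r" using \<open>C > 0\<close> by (simp add: \<rho>_def)
    then show "?E r \<subseteq> large_coefficients Dom \<phi> \<psi> (\<rho> * r)"
      using C[of "\<rho> * r"] T by (fastforce simp: not_less dest: order_trans)
    show "measure (coef_law Dom \<phi> \<psi>) (large_coefficients Dom \<phi> \<psi> (\<rho> * r)) \<le> ?K * exp (- \<rho> * r)"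
      using large_coefficients_measurable_bound(2)[OF T] by simp
    show "large_coefficients Dom \<phi> \<psi> (\<rho> * r) \<in> sets (coef_law Dom \<phi> \<psi>)"
      by (rule large_coefficients_measurable_bound(1)[OF T])
  qed
  then have "\<exists>c>0. \<forall>r>0. \<exists>A\<in>sets (coef_law Dom \<phi> \<psi>). ?E r \<subseteq> A \<and>
      measure (coef_law Dom \<phi> \<psi>) A \<le> c * exp (- \<rho> * r)"
    by (rule exp_tail_all_radii[OF prob_space_coef_law \<rho>]) auto
  then show ?thesis using \<rho> by blast
qed

lemma cs_wavelet_basis_compact_wavelet_pair:
  assumes "cs_wavelet_basis S \<phi> \<psi> n"
  obtains N where "compact_wavelet_pair \<phi> \<psi> S N"
proof -
  from assms have "C1d S \<phi>" "C1d S \<psi>" "bounded {t. \<phi> t \<noteq> 0}" "bounded {t. \<psi> t \<noteq> 0}"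
    unfolding cs_wavelet_basis_def by auto
  moreover obtain N\<^sub>\<phi> where N\<^sub>\<phi>: "\<And>t. real N\<^sub>\<phi> < \<bar>t\<bar> \<Longrightarrow> \<phi> t = 0"
    using bounded_support_vanishes_outside[OF \<open>bounded {t. \<phi> t \<noteq> 0}\<close>] by blast
  moreover obtain N\<^sub>\<psi> where N\<^sub>\<psi>: "\<And>t. real N\<^sub>\<psi> < \<bar>t\<bar> \<Longrightarrow> \<psi> t = 0"
    using bounded_support_vanishes_outside[OF \<open>bounded {t. \<psi> t \<noteq> 0}\<close>] by blast
  ultimately have "compact_wavelet_pair \<phi> \<psi> S (max N\<^sub>\<phi> N\<^sub>\<psi>)"
    by unfold_locales simp_all
  then show thesis by (rule that)
qed

theorem lemma6p2:
  fixes Dom :: "(real^'n::finite) set"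
    and \<phi> \<psi> :: "real \<Rightarrow> real"
    and \<alpha> b S :: nat
  assumes "Dom \<noteq> {}" and "open Dom" and "bounded Dom" and "smooth_boundary Dom"
    and "cs_wavelet_basis S \<phi> \<psi> TYPE('n)" and "S > \<alpha>"
    and "\<alpha> > 1 + CARD('n)"
    and "1 \<le> b" and "b + CARD('n) < \<alpha>"
  shows "\<exists>c1 c2::real. c1 > 0 \<and> c2 > 0 \<and>
           (\<forall>r::real. r > 0 \<longrightarrow>
              (\<exists>A\<in>sets (coef_law Dom \<phi> \<psi>).
                 {\<xi>\<in>space (coef_law Dom \<phi> \<psi>). Cb_norm b (Ftilde (real \<alpha>) Dom \<phi> \<psi> \<xi>) \<ge> ereal r} \<subseteq> A \<and>
                 measure (coef_law Dom \<phi> \<psi>) A \<le> c1 * exp (- c2 * r)))"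
proof -
  obtain N where pair: "compact_wavelet_pair \<phi> \<psi> S N"
    using cs_wavelet_basis_compact_wavelet_pair[OF assms(5)] by blast
  obtain D where box: "\<And>x j. x \<in> Dom \<Longrightarrow> \<bar>x$j\<bar> \<le> real D"
    using bounded_components_le[OF assms(3)] by blast
  interpret compact_wavelet_domain \<phi> \<psi> S N Dom D
    using pair box by (simp add: compact_wavelet_domain_def compact_wavelet_domain_axioms_def)
  have "b \<le> S" and "real b + real CARD('n) + 1 \<le> real \<alpha>"
    using assms(6,9) by linarith+
  then show ?thesis by (rule Cb_norm_Ftilde_exp_tail)
qed

end
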